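(* Let $n\leq 5$ be a positive integer, let $X_1,\ldots,X_n$ be independent Bernoulli random variables, $S=\sum_{i=1}^n X_i$, and let $Z$ be a Poisson random variable with mean $1$, independent of $S$. Assume that $S+Z$ has a unique mode $m_1$, and let $m_0$ be any mode of $S$. Then $m_1\leq m_0+1$.
   Context: A mode of a random variable $X$ taking values in $\{0,1,2,\ldots\}$ is any integer $m$ at which $k\mapsto\Pr(X=k)$ attains its maximum. The Bernoulli variables may have arbitrary (possibly different) success probabilities. *)

theory Defs
  imports "HOL-Probability.Probability"
begin

definition is_mode :: "nat pmf \<Rightarrow> nat \<Rightarrow> bool" where
  "is_mode q m \<longleftrightarrow> (\<forall>k. pmf q k \<le> pmf q m)"

definition bern_sum_pmf :: "nat \<Rightarrow> (nat \<Rightarrow> real) \<Rightarrow> nat pmf" where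
  "bern_sum_pmf n p =
     map_pmf (\<lambda>x. \<Sum>i<n. of_bool (x i)) (Pi_pmf {..<n} False (\<lambda>i. bernoulli_pmf (p i)))"

definition plus_poisson1_pmf :: "nat pmf \<Rightarrow> nat pmf" where
  "plus_poisson1_pmf S = bind_pmf S (\<lambda>s. map_pmf (\<lambda>z. s + z) (poisson_pmf 1))"

end

theory Submission
  imports Defs
begin

(* Let s k = Pr(S = k).  Then s is the coefficient sequence of the polynomial
   \<Prod>i<n. (1 - p i + p i x), so it has no internal zeros, and for n \<le> 5 it satisfies the
   strengthened Newton inequality  2 s(k) s(k+2) \<le> s(k+1)^2, certified by explicit sums of
   squares for the padded case n = 5.  Starting from a mode m0, these two facts make s
   non-increasing beyond m0 and give  2 s(i+2) \<le> s(i)  for all i \<ge> m0.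
   On the other hand  Pr(S + Z = j) = e^{-1} \<Sum>k\<le>j. s k / (j - k)!,  and comparing the sums
   for j = i+2 and j = i+1 term by term shows that  2 s(i+2) \<le> s(i)  implies
   Pr(S + Z = i+2) \<le> Pr(S + Z = i+1).  Hence if the unique mode m1 of S + Z were \<ge> m0 + 2,
   then m1 - 1 would be a mode as well, a contradiction. *)

text \<open>Coefficient of \<open>x^k\<close> in \<open>\<Prod>i<n. (Q i + P i * x)\<close>, computed by multiplying in one factor
  at a time.\<close>
fun prod_coeff :: "nat \<Rightarrow> (nat \<Rightarrow> real) \<Rightarrow> (nat \<Rightarrow> real) \<Rightarrow> nat \<Rightarrow> real" where
  "prod_coeff 0 P Q k = (if k = 0 then 1 else 0)"
| "prod_coeff (Suc n) P Q k =
     Q n * prod_coeff n P Q k + (if k = 0 then 0 else P n * prod_coeff n P Q (k - 1))"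

lemma prod_coeff_eq_0: "n < k \<Longrightarrow> prod_coeff n P Q k = 0"
  by (induction n arbitrary: k) auto

lemma prod_coeff_nonneg: "(\<And>i. 0 \<le> P i) \<Longrightarrow> (\<And>i. 0 \<le> Q i) \<Longrightarrow> 0 \<le> prod_coeff n P Q k"
  by (induction n arbitrary: k) auto

lemma prod_coeff_cong:
  "(\<And>i. i < n \<Longrightarrow> P i = P' i \<and> Q i = Q' i) \<Longrightarrow> prod_coeff n P Q k = prod_coeff n P' Q' k"
  by (induction n arbitrary: k) auto

text \<open>Trivial factors \<open>1 + 0 * x\<close> do not change the coefficients; this reduces \<open>n \<le> 5\<close> to \<open>n = 5\<close>.\<close>
lemma prod_coeff_pad:
  assumes "n \<le> m" and "\<And>i. n \<le> i \<Longrightarrow> P i = 0 \<and> Q i = 1"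
  shows "prod_coeff m P Q k = prod_coeff n P Q k"
  using assms(1)
proof (induction m arbitrary: k rule: dec_induct)
  case base then show ?case by simp
next
  case (step m) then show ?case using assms(2)[of m] by simp
qed

text \<open>Reversing the polynomial exchanges the roles of \<open>P\<close> and \<open>Q\<close>.\<close>
lemma prod_coeff_swap: "k \<le> n \<Longrightarrow> prod_coeff n P Q k = prod_coeff n Q P (n - k)"
proof (induction n arbitrary: k)
  case 0 then show ?case by simp
next
  case (Suc n)
  show ?case
  proof (cases k)
    case 0 then show ?thesis using Suc.IH[of 0] by (simp add: prod_coeff_eq_0)
  next
    case (Suc k')
    then show ?thesis using Suc.IH[of k'] Suc.IH[of "Suc k'"] Suc.prems
      by (cases "k' = n") (auto simp: prod_coeff_eq_0 Suc_diff_Suc)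
  qed
qed

text \<open>For Bernoulli factors \<open>1 - P i + P i * x\<close> the coefficients are positive exactly on an
  interval: multiplying by a factor either shifts the support or widens it by one.\<close>
lemma prod_coeff_support_interval:
  assumes "\<And>i. 0 \<le> P i \<and> P i \<le> 1"
  shows "\<exists>a b. a \<le> b \<and> (\<forall>k. 0 < prod_coeff n P (\<lambda>i. 1 - P i) k \<longleftrightarrow> a \<le> k \<and> k \<le> b)"
proof (induction n)
  case 0
  show ?case by (rule exI[of _ 0], rule exI[of _ 0]) auto
next
  case (Suc n)
  let ?c = "prod_coeff n P (\<lambda>i. 1 - P i)"
  obtain a b where "a \<le> b" and ab: "\<And>k. 0 < ?c k \<longleftrightarrow> a \<le> k \<and> k \<le> b"
    using Suc.IH by blast
  have nonneg: "\<And>k. 0 \<le> ?c k" by (rule prod_coeff_nonneg) (use assms in auto)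
  consider "P n = 0" | "P n = 1" | "0 < P n" "P n < 1" using assms[of n] by linarith
  then show ?case
  proof cases
    case 1
    then have "prod_coeff (Suc n) P (\<lambda>i. 1 - P i) = ?c" by (simp add: fun_eq_iff)
    then show ?thesis using Suc.IH by simp
  next
    case 2
    have "0 < prod_coeff (Suc n) P (\<lambda>i. 1 - P i) k \<longleftrightarrow> Suc a \<le> k \<and> k \<le> Suc b" for k
      using 2 ab[of "k - 1"] by (cases k) auto
    moreover have "Suc a \<le> Suc b" using \<open>a \<le> b\<close> by simp
    ultimately show ?thesis by blast
  next
    case 3
    have pos_iff: "0 < prod_coeff (Suc n) P (\<lambda>i. 1 - P i) k \<longleftrightarrow> 0 < ?c k \<or> (k \<noteq> 0 \<and> 0 < ?c (k - 1))"
      for k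
    proof -
      have "0 \<le> (1 - P n) * ?c k" "0 \<le> P n * ?c (k - 1)"
        using 3 nonneg[of k] nonneg[of "k - 1"] by simp_all
      moreover have "0 < (1 - P n) * ?c k \<longleftrightarrow> 0 < ?c k" "0 < P n * ?c (k - 1) \<longleftrightarrow> 0 < ?c (k - 1)"
        using 3 by (simp_all add: zero_less_mult_iff)
      ultimately show ?thesis by auto
    qed
    have "0 < prod_coeff (Suc n) P (\<lambda>i. 1 - P i) k \<longleftrightarrow> a \<le> k \<and> k \<le> Suc b" for k
      unfolding pos_iff using \<open>a \<le> b\<close> ab[of k] ab[of "k - 1"] by (cases k) auto
    moreover have "a \<le> Suc b" using \<open>a \<le> b\<close> by simp
    ultimately show ?thesis by blast
  qed
qed

lemma prod_coeff_no_internal_zeros: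
  assumes "\<And>i. 0 \<le> P i \<and> P i \<le> 1"
    and "i \<le> j" "j \<le> l"
    and "0 < prod_coeff n P (\<lambda>i. 1 - P i) i" "0 < prod_coeff n P (\<lambda>i. 1 - P i) l"
  shows "0 < prod_coeff n P (\<lambda>i. 1 - P i) j"
proof -
  obtain a b where "a \<le> b" "\<And>k. 0 < prod_coeff n P (\<lambda>i. 1 - P i) k \<longleftrightarrow> a \<le> k \<and> k \<le> b"
    using prod_coeff_support_interval[of P n] assms(1) by blast
  then show ?thesis using assms(2-) by (meson order_trans)
qed

lemma newton_gap_5_0:
  "prod_coeff 5 P Q 1 ^ 2 - 2 * prod_coeff 5 P Q 0 * prod_coeff 5 P Q 2
     = (\<Sum>i<5. (P i * (\<Prod>j\<in>{..<5} - {i}. Q j))\<^sup>2)"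
  by (simp add: numeral_eq_Suc lessThan_Suc insert_Diff_if) algebra

lemma newton_gap_5_1:
  "prod_coeff 5 P Q 2 ^ 2 - 2 * prod_coeff 5 P Q 1 * prod_coeff 5 P Q 3 = (1/3) * (
        (Q 0)^2 * (P 1 * P 2 * Q 3 * Q 4 - P 3 * P 4 * Q 1 * Q 2)^2 +
        (Q 0)^2 * (P 1 * P 3 * Q 2 * Q 4 - P 2 * P 4 * Q 1 * Q 3)^2 +
        (Q 0)^2 * (P 1 * P 4 * Q 2 * Q 3 - P 2 * P 3 * Q 1 * Q 4)^2 +
        (Q 1)^2 * (P 0 * P 2 * Q 3 * Q 4 - P 3 * P 4 * Q 0 * Q 2)^2 +
        (Q 1)^2 * (P 0 * P 3 * Q 2 * Q 4 - P 2 * P 4 * Q 0 * Q 3)^2 +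
        (Q 1)^2 * (P 0 * P 4 * Q 2 * Q 3 - P 2 * P 3 * Q 0 * Q 4)^2 +
        (Q 2)^2 * (P 0 * P 1 * Q 3 * Q 4 - P 3 * P 4 * Q 0 * Q 1)^2 +
        (Q 2)^2 * (P 0 * P 3 * Q 1 * Q 4 - P 1 * P 4 * Q 0 * Q 3)^2 +
        (Q 2)^2 * (P 0 * P 4 * Q 1 * Q 3 - P 1 * P 3 * Q 0 * Q 4)^2 +
        (Q 3)^2 * (P 0 * P 1 * Q 2 * Q 4 - P 2 * P 4 * Q 0 * Q 1)^2 +
        (Q 3)^2 * (P 0 * P 2 * Q 1 * Q 4 - P 1 * P 4 * Q 0 * Q 2)^2 +
        (Q 3)^2 * (P 0 * P 4 * Q 1 * Q 2 - P 1 * P 2 * Q 0 * Q 4)^2 +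
        (Q 4)^2 * (P 0 * P 1 * Q 2 * Q 3 - P 2 * P 3 * Q 0 * Q 1)^2 +
        (Q 4)^2 * (P 0 * P 2 * Q 1 * Q 3 - P 1 * P 3 * Q 0 * Q 2)^2 +
        (Q 4)^2 * (P 0 * P 3 * Q 1 * Q 2 - P 1 * P 2 * Q 0 * Q 3)^2)"
  by (simp add: numeral_eq_Suc) algebra

text \<open>Newton's inequality with constant 2 at every position, for five factors.  The two upper
  positions follow from the two lower ones by \<open>prod_coeff_swap\<close>; beyond the degree it is trivial.\<close>
lemma prod_coeff_5_newton:
  fixes P Q :: "nat \<Rightarrow> real"
  shows "2 * prod_coeff 5 P Q k * prod_coeff 5 P Q (k + 2) \<le> prod_coeff 5 P Q (k + 1) ^ 2"
proof -
  have low0: "2 * prod_coeff 5 P' Q' 0 * prod_coeff 5 P' Q' 2 \<le> prod_coeff 5 P' Q' 1 ^ 2"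
    for P' Q' :: "nat \<Rightarrow> real"
  proof -
    have "0 \<le> prod_coeff 5 P' Q' 1 ^ 2 - 2 * prod_coeff 5 P' Q' 0 * prod_coeff 5 P' Q' 2"
      unfolding newton_gap_5_0 by (intro sum_nonneg zero_le_power2)
    then show ?thesis by simp
  qed
  have low1: "2 * prod_coeff 5 P' Q' 1 * prod_coeff 5 P' Q' 3 \<le> prod_coeff 5 P' Q' 2 ^ 2"
    for P' Q' :: "nat \<Rightarrow> real"
  proof -
    have "0 \<le> prod_coeff 5 P' Q' 2 ^ 2 - 2 * prod_coeff 5 P' Q' 1 * prod_coeff 5 P' Q' 3"
      unfolding newton_gap_5_1 by (intro add_nonneg_nonneg mult_nonneg_nonneg zero_le_power2) simp_all
    then show ?thesis by simp
  qed
  have swap: "prod_coeff 5 P Q j = prod_coeff 5 Q P (5 - j)" if "j \<le> 5" for j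
    using prod_coeff_swap[OF that] .
  have up2: "2 * prod_coeff 5 P Q 2 * prod_coeff 5 P Q 4 \<le> prod_coeff 5 P Q 3 ^ 2"
    using low1[of Q P] swap[of 2] swap[of 3] swap[of 4] by (simp add: ac_simps)
  have up3: "2 * prod_coeff 5 P Q 3 * prod_coeff 5 P Q 5 \<le> prod_coeff 5 P Q 4 ^ 2"
    using low0[of Q P] swap[of 3] swap[of 4] swap[of 5] by (simp add: ac_simps)
  consider "k = 0" | "k = 1" | "k = 2" | "k = 3" | "4 \<le> k" by linarith
  then show ?thesis
  proof cases
    case 1 then show ?thesis using low0[of P Q] by (simp add: numeral_2_eq_2)
  next
    case 2 then show ?thesis using low1[of P Q] by (simp add: numeral_2_eq_2 numeral_3_eq_3)
  next
    case 3 then show ?thesis using up2 by simp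
  next
    case 4 then show ?thesis using up3 by simp
  next
    case 5 then show ?thesis by (simp add: prod_coeff_eq_0)
  qed
qed

lemma pmf_map_add:
  "pmf (map_pmf (\<lambda>s. c + s) S) (k :: nat) = (if c \<le> k then pmf S (k - c) else 0)"
proof (cases "c \<le> k")
  case True
  then have "pmf (map_pmf (\<lambda>s. c + s) S) k = pmf (map_pmf (\<lambda>s. c + s) S) (c + (k - c))" by simp
  also have "\<dots> = pmf S (k - c)" by (rule pmf_map_inj') (auto simp: inj_def)
  finally show ?thesis using True by simp
next
  case False
  then show ?thesis by (auto simp: pmf_eq_0_set_pmf)
qed

lemma bern_sum_pmf_Suc:
  "bern_sum_pmf (Suc n) p =
     bind_pmf (bernoulli_pmf (p n)) (\<lambda>y. map_pmf (\<lambda>s. of_bool y + s) (bern_sum_pmf n p))"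
proof -
  let ?X = "Pi_pmf {..<n} False (\<lambda>i. bernoulli_pmf (p i))"
  have upd: "(\<Sum>i<Suc n. of_bool ((f(n := y)) i) :: nat) = of_bool y + (\<Sum>i<n. of_bool (f i))"
    for f :: "nat \<Rightarrow> bool" and y
  proof -
    have "(\<Sum>i<n. of_bool ((f(n := y)) i) :: nat) = (\<Sum>i<n. of_bool (f i))" by (rule sum.cong) auto
    then show ?thesis by simp
  qed
  have "bern_sum_pmf (Suc n) p = map_pmf (\<lambda>x. \<Sum>i<Suc n. of_bool (x i))
     (map_pmf (\<lambda>(y, f). f(n := y)) (pair_pmf (bernoulli_pmf (p n)) ?X))"
    unfolding bern_sum_pmf_def lessThan_Suc by (subst Pi_pmf_insert) auto
  also have "\<dots> = map_pmf (\<lambda>(y, f). of_bool y + (\<Sum>i<n. of_bool (f i)))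
     (pair_pmf (bernoulli_pmf (p n)) ?X)"
    unfolding pmf.map_comp by (intro map_pmf_cong refl) (auto simp only: upd comp_def split: prod.splits)
  also have "\<dots> = bind_pmf (bernoulli_pmf (p n)) (\<lambda>y. map_pmf (\<lambda>s. of_bool y + s) (bern_sum_pmf n p))"
    unfolding pair_pmf_def bern_sum_pmf_def map_bind_pmf bind_map_pmf map_return_pmf
    by (simp add: map_pmf_def bind_assoc_pmf bind_return_pmf)
  finally show ?thesis .
qed

lemma pmf_bern_sum_pmf:
  assumes "\<And>i. i < n \<Longrightarrow> 0 \<le> p i \<and> p i \<le> 1"
  shows "pmf (bern_sum_pmf n p) k = prod_coeff n p (\<lambda>i. 1 - p i) k"
  using assms
proof (induction n arbitrary: k)
  case 0
  then show ?case by (simp add: bern_sum_pmf_def)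
next
  case (Suc n)
  have pn: "0 \<le> p n" "p n \<le> 1" using Suc.prems[of n] by auto
  have IH: "\<And>k. pmf (bern_sum_pmf n p) k = prod_coeff n p (\<lambda>i. 1 - p i) k" using Suc by auto
  have shift: "pmf (map_pmf Suc (bern_sum_pmf n p)) k = (if k = 0 then 0 else pmf (bern_sum_pmf n p) (k - 1))"
    for k using pmf_map_add[of 1 "bern_sum_pmf n p" k] by simp
  have "pmf (bern_sum_pmf (Suc n) p) k =
     (\<Sum>y\<in>UNIV. pmf (map_pmf (\<lambda>s. of_bool y + s) (bern_sum_pmf n p)) k * pmf (bernoulli_pmf (p n)) y)"
    unfolding bern_sum_pmf_Suc pmf_bind by (rule integral_measure_pmf_real) auto
  also have "\<dots> = prod_coeff (Suc n) p (\<lambda>i. 1 - p i) k"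
    using pn by (cases k) (simp_all add: UNIV_bool shift IH algebra_simps)
  finally show ?case .
qed

definition pad_prob :: "nat \<Rightarrow> (nat \<Rightarrow> real) \<Rightarrow> nat \<Rightarrow> real" where
  "pad_prob n p i = (if i < n then p i else 0)"

lemma pmf_bern_sum_pmf_padded:
  assumes "n \<le> m" and "\<And>i. i < n \<Longrightarrow> 0 \<le> p i \<and> p i \<le> 1"
  shows "pmf (bern_sum_pmf n p) k = prod_coeff m (pad_prob n p) (\<lambda>i. 1 - pad_prob n p i) k"
proof -
  have "pmf (bern_sum_pmf n p) k = prod_coeff n p (\<lambda>i. 1 - p i) k"
    by (rule pmf_bern_sum_pmf) (fact assms(2))
  also have "\<dots> = prod_coeff n (pad_prob n p) (\<lambda>i. 1 - pad_prob n p i) k"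
    by (rule prod_coeff_cong) (simp add: pad_prob_def)
  also have "\<dots> = prod_coeff m (pad_prob n p) (\<lambda>i. 1 - pad_prob n p i) k"
    by (rule prod_coeff_pad[symmetric]) (use assms(1) in \<open>auto simp: pad_prob_def\<close>)
  finally show ?thesis .
qed

lemma bern_sum_pmf_newton:
  assumes "n \<le> 5" and "\<And>i. i < n \<Longrightarrow> 0 \<le> p i \<and> p i \<le> 1"
  shows "2 * pmf (bern_sum_pmf n p) k * pmf (bern_sum_pmf n p) (k + 2) \<le> pmf (bern_sum_pmf n p) (k + 1) ^ 2"
proof -
  have padded: "pmf (bern_sum_pmf n p) j = prod_coeff 5 (pad_prob n p) (\<lambda>i. 1 - pad_prob n p i) j"
    for j using assms by (rule pmf_bern_sum_pmf_padded)
  show ?thesis unfolding padded by (rule prod_coeff_5_newton)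
qed

lemma bern_sum_pmf_no_internal_zeros:
  assumes "\<And>i. i < n \<Longrightarrow> 0 \<le> p i \<and> p i \<le> 1"
    and "i \<le> j" "j \<le> l" "0 < pmf (bern_sum_pmf n p) i" "0 < pmf (bern_sum_pmf n p) l"
  shows "0 < pmf (bern_sum_pmf n p) j"
proof -
  have "pmf (bern_sum_pmf n p) k = prod_coeff n (pad_prob n p) (\<lambda>i. 1 - pad_prob n p i) k" for k
    using order_refl assms(1) by (rule pmf_bern_sum_pmf_padded)
  moreover have "0 \<le> pad_prob n p i \<and> pad_prob n p i \<le> 1" for i
    using assms(1) by (simp add: pad_prob_def)
  ultimately show ?thesis
    using prod_coeff_no_internal_zeros[of "pad_prob n p"] assms(2-) by simp
qed

lemma pmf_plus_poisson1:
  "pmf (plus_poisson1_pmf S) j = exp (-1) * (\<Sum>k\<le>j. pmf S k / fact (j - k))"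
proof -
  have "pmf (plus_poisson1_pmf S) j = (\<Sum>k\<le>j. pmf (map_pmf (\<lambda>z. k + z) (poisson_pmf 1)) j * pmf S k)"
    unfolding plus_poisson1_pmf_def pmf_bind
  proof (rule integral_measure_pmf_real)
    fix k assume "pmf (map_pmf (\<lambda>z. k + z) (poisson_pmf 1)) j \<noteq> 0"
    then show "k \<in> {..j}" by (simp add: pmf_map_add split: if_splits)
  qed simp
  also have "\<dots> = exp (-1) * (\<Sum>k\<le>j. pmf S k / fact (j - k))"
    unfolding sum_distrib_left by (rule sum.cong) (simp_all add: pmf_map_add)
  finally show ?thesis .
qed

lemma decreasing_after_max:
  fixes s :: "nat \<Rightarrow> real"
  assumes nonneg: "\<And>k. 0 \<le> s k"
    and newton: "\<And>k. 2 * s k * s (k + 2) \<le> s (k + 1) ^ 2"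
    and no_gaps: "\<And>i j l. i \<le> j \<Longrightarrow> j \<le> l \<Longrightarrow> 0 < s i \<Longrightarrow> 0 < s l \<Longrightarrow> 0 < s j"
    and max: "\<And>k. s k \<le> s m" and pos: "0 < s m"
    and "m \<le> k"
  shows "s (k + 1) \<le> s k"
  using \<open>m \<le> k\<close>
proof (induction k rule: dec_induct)
  case base
  then show ?case using max by simp
next
  case (step k)
  show ?case
  proof (cases "0 < s (k + 1)")
    case True
    have "s k * (2 * s (k + 2)) \<le> s (k + 1) * s (k + 1)"
      using newton[of k] by (simp add: power2_eq_square algebra_simps)
    also have "\<dots> \<le> s k * s (k + 1)" using step.IH True by simp
    finally have "2 * s (k + 2) \<le> s (k + 1)" using True step.IH by simp
    then show ?thesis using nonneg[of "k + 2"] by simp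
  next
    case False
    then have "s (k + 2) \<le> 0" using no_gaps[of m "k + 1" "k + 2"] step.hyps pos by force
    then show ?thesis using nonneg[of "k + 1"] by simp
  qed
qed

lemma halving_after_max:
  fixes s :: "nat \<Rightarrow> real"
  assumes nonneg: "\<And>k. 0 \<le> s k"
    and newton: "\<And>k. 2 * s k * s (k + 2) \<le> s (k + 1) ^ 2"
    and no_gaps: "\<And>i j l. i \<le> j \<Longrightarrow> j \<le> l \<Longrightarrow> 0 < s i \<Longrightarrow> 0 < s l \<Longrightarrow> 0 < s j"
    and max: "\<And>k. s k \<le> s m" and pos: "0 < s m"
    and "m \<le> i"
  shows "2 * s (i + 2) \<le> s i"
proof -
  have dec: "s (k + 1) \<le> s k" if "m \<le> k" for k
    using decreasing_after_max[OF nonneg newton no_gaps max pos that] .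
  show ?thesis
  proof (cases "0 < s i")
    case True
    have "s i * (2 * s (i + 2)) \<le> s (i + 1) * s (i + 1)"
      using newton[of i] by (simp add: power2_eq_square algebra_simps)
    also have "\<dots> \<le> s i * s i"
      using dec[of i] \<open>m \<le> i\<close> nonneg[of "i + 1"] by (intro mult_mono) auto
    finally show ?thesis using True by simp
  next
    case False
    then show ?thesis using dec[of i] dec[of "i + 1"] \<open>m \<le> i\<close> nonneg[of i] by simp
  qed
qed

lemma sum_atMost_split_at:
  fixes f :: "nat \<Rightarrow> 'a :: comm_monoid_add"
  shows "(\<Sum>k\<le>i + d. f k) = (\<Sum>k<i. f k) + (\<Sum>k\<le>d. f (i + k))"
  by (induction d) (simp_all add: lessThan_Suc_atMost[symmetric] add.assoc)

text \<open>The terms \<open>k < i\<close> only get smaller since \<open>(i+2-k)! \<ge> (i+1-k)!\<close>;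
  the term \<open>k = i\<close> loses \<open>s(i)/2\<close>, which pays for the new term \<open>s(i+2)\<close>.\<close>
lemma poisson_smoothing_step:
  fixes s :: "nat \<Rightarrow> real"
  assumes nonneg: "\<And>k. 0 \<le> s k" and halving: "2 * s (i + 2) \<le> s i"
  shows "(\<Sum>k\<le>i + 2. s k / fact (i + 2 - k)) \<le> (\<Sum>k\<le>i + 1. s k / fact (i + 1 - k))"
proof -
  have early_terms: "(\<Sum>k<i. s k / fact (i + 2 - k)) \<le> (\<Sum>k<i. s k / fact (i + 1 - k))"
  proof (rule sum_mono)
    fix k assume "k \<in> {..<i}"
    have "fact (i + 1 - k) \<le> (fact (i + 2 - k) :: real)" by (rule fact_mono) auto
    then show "s k / fact (i + 2 - k) \<le> s k / fact (i + 1 - k)"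
      using nonneg[of k] by (intro divide_left_mono) auto
  qed
  have "(\<Sum>k\<le>i + 2. s k / fact (i + 2 - k))
      = (\<Sum>k<i. s k / fact (i + 2 - k)) + s i / 2 + s (i + 1) + s (i + 2)"
    unfolding sum_atMost_split_at by (simp add: numeral_2_eq_2)
  moreover have "(\<Sum>k\<le>i + 1. s k / fact (i + 1 - k)) = (\<Sum>k<i. s k / fact (i + 1 - k)) + s i + s (i + 1)"
    unfolding sum_atMost_split_at by simp
  ultimately show ?thesis using early_terms halving by simp
qed

theorem mainTheorem6:
  fixes n :: nat and p :: "nat \<Rightarrow> real" and m0 m1 :: nat
  assumes "0 < n" and "n \<le> 5"
    and "\<And>i. i < n \<Longrightarrow> 0 \<le> p i \<and> p i \<le> 1"
    and "is_mode (plus_poisson1_pmf (bern_sum_pmf n p)) m1"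
    and "\<And>m. is_mode (plus_poisson1_pmf (bern_sum_pmf n p)) m \<Longrightarrow> m = m1"
    and "is_mode (bern_sum_pmf n p) m0"
  shows "m1 \<le> m0 + 1"
proof (rule ccontr)
  assume "\<not> m1 \<le> m0 + 1"
  define i where "i = m1 - 2"
  have i: "m1 = i + 2" "m0 \<le> i" using \<open>\<not> m1 \<le> m0 + 1\<close> by (simp_all add: i_def)
  let ?S = "bern_sum_pmf n p" and ?T = "plus_poisson1_pmf (bern_sum_pmf n p)"
  have max: "\<And>k. pmf ?S k \<le> pmf ?S m0" using assms(6) by (simp add: is_mode_def)
  obtain x where "x \<in> set_pmf ?S" using set_pmf_not_empty by fast
  then have pos: "0 < pmf ?S m0" using pmf_positive max[of x] by (meson less_le_trans)
  have newton: "\<And>k. 2 * pmf ?S k * pmf ?S (k + 2) \<le> pmf ?S (k + 1) ^ 2"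
    using assms(2,3) by (rule bern_sum_pmf_newton)
  have no_gaps: "\<And>i j l. i \<le> j \<Longrightarrow> j \<le> l \<Longrightarrow> 0 < pmf ?S i \<Longrightarrow> 0 < pmf ?S l \<Longrightarrow> 0 < pmf ?S j"
    using assms(3) by (rule bern_sum_pmf_no_internal_zeros)
  have "2 * pmf ?S (i + 2) \<le> pmf ?S i"
    using halving_after_max[OF pmf_nonneg newton no_gaps max pos \<open>m0 \<le> i\<close>] .
  then have "(\<Sum>k\<le>i + 2. pmf ?S k / fact (i + 2 - k)) \<le> (\<Sum>k\<le>i + 1. pmf ?S k / fact (i + 1 - k))"
    by (rule poisson_smoothing_step[OF pmf_nonneg])
  then have "pmf ?T m1 \<le> pmf ?T (i + 1)"
    unfolding pmf_plus_poisson1 i(1) by (rule mult_left_mono) simp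
  with assms(4) have "is_mode ?T (i + 1)"
    unfolding is_mode_def by (meson order_trans)
  then have "i + 1 = m1" by (rule assms(5))
  then show False using i(1) by simp
qed

end
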